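(* Let $\sigma$ be a confined position on $K_{a,b}$ with sides $L$ ($|L|=a$) and $R$ ($|R|=b$), let $t\ge 1$, and suppose $\alpha_t(L)=ka$ for some positive integer $k$. Then $u_{t+1}(\sigma,w)-u_1(\sigma,w)=k$ for every $w\in R$.
   Context: Parallel chip-firing game: a position $\sigma$ assigns a nonnegative integer to each vertex; writing $\Phi_\sigma(v)$ for the number of neighbors $w$ of $v$ with $\sigma(w)\ge\deg(w)$, the step operator is $U\sigma(v)=\sigma(v)+\Phi_\sigma(v)$ if $\sigma(v)\le \deg(v)-1$ and $U\sigma(v)=\sigma(v)+\Phi_\sigma(v)-\deg(v)$ otherwise. A position is confined if every vertex satisfies $\Phi_\sigma(v)\le\sigma(v)\le\Phi_\sigma(v)+\deg(v)-1$. In $K_{a,b}$ each vertex of $L$ is adjacent exactly to all vertices of $R$ (so $L$-vertices have degree $b$, $R$-vertices degree $a$). $u_t(\sigma,v)=|\{s: 0\le s<t,\ U^s\sigma(v)\ge\deg(v)\}|$, and $\alpha_t(L)=\sum_{v\in L}u_t(\sigma,v)$. *)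

theory Defs
  imports Main
begin

(* A graph is given by a vertex set V and a (symmetric) adjacency relation E.
   A position assigns a nonnegative integer (nat) to each vertex. *)

definition deg :: "'v set \<Rightarrow> ('v \<Rightarrow> 'v \<Rightarrow> bool) \<Rightarrow> 'v \<Rightarrow> nat" where
  "deg V E v = card {w \<in> V. E v w}"

definition Phi :: "'v set \<Rightarrow> ('v \<Rightarrow> 'v \<Rightarrow> bool) \<Rightarrow> ('v \<Rightarrow> nat) \<Rightarrow> 'v \<Rightarrow> nat" where
  "Phi V E \<sigma> v = card {w \<in> V. E v w \<and> \<sigma> w \<ge> deg V E w}"

definition step :: "'v set \<Rightarrow> ('v \<Rightarrow> 'v \<Rightarrow> bool) \<Rightarrow> ('v \<Rightarrow> nat) \<Rightarrow> ('v \<Rightarrow> nat)" where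
  "step V E \<sigma> = (\<lambda>v. if \<sigma> v + 1 \<le> deg V E v then \<sigma> v + Phi V E \<sigma> v
                      else \<sigma> v + Phi V E \<sigma> v - deg V E v)"

(* confined: Phi(v) <= sigma(v) <= Phi(v) + deg(v) - 1, the upper bound written
   without truncated subtraction as sigma(v) + 1 <= Phi(v) + deg(v) *)
definition confined :: "'v set \<Rightarrow> ('v \<Rightarrow> 'v \<Rightarrow> bool) \<Rightarrow> ('v \<Rightarrow> nat) \<Rightarrow> bool" where
  "confined V E \<sigma> \<longleftrightarrow> (\<forall>v\<in>V. Phi V E \<sigma> v \<le> \<sigma> v \<and> \<sigma> v + 1 \<le> Phi V E \<sigma> v + deg V E v)"

definition fire_count :: "'v set \<Rightarrow> ('v \<Rightarrow> 'v \<Rightarrow> bool) \<Rightarrow> nat \<Rightarrow> ('v \<Rightarrow> nat) \<Rightarrow> 'v \<Rightarrow> nat" where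
  "fire_count V E t \<sigma> v = card {s. s < t \<and> ((step V E ^^ s) \<sigma>) v \<ge> deg V E v}"

definition alpha :: "'v set \<Rightarrow> ('v \<Rightarrow> 'v \<Rightarrow> bool) \<Rightarrow> nat \<Rightarrow> ('v \<Rightarrow> nat) \<Rightarrow> 'v set \<Rightarrow> nat" where
  "alpha V E t \<sigma> S = (\<Sum>v\<in>S. fire_count V E t \<sigma> v)"

definition kab_adj :: "'v set \<Rightarrow> 'v set \<Rightarrow> 'v \<Rightarrow> 'v \<Rightarrow> bool" where
  "kab_adj L R v w \<longleftrightarrow> (v \<in> L \<and> w \<in> R) \<or> (v \<in> R \<and> w \<in> L)"

end

theory Submission
  imports Defs
begin

(* In K_{a,b} a vertex w of R has degree a = |L|, and the number of
   its firing neighbours at time s is A s, the number of L-vertices firing at s.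
   So the chip count x s of w evolves as an abstract counter
       x (s+1) = x s + A s - a * [x s >= a],   with 0 <= A s <= a.
   Summing this gives the balance  a * u_n + x n = x 0 + (sum of A s, s < n);
   confinement gives x 0 < 2a, hence x s < 2a forever and x (s+1) = A s + x s mod a.
   Exchanging the order of summation, the sum of A s over s < t is alpha_t(L) = k a,
   so x t = x 0 (mod a); comparing the balance at times 1 and t+1 yields
   u_{t+1} - u_1 = k. *)

lemma card_less_Suc:
  "card {s. s < Suc t \<and> P s} = card {s. s < t \<and> P s} + (if P t then 1 else 0)"
proof -
  have "{s. s < Suc t \<and> P s} = {s. s < t \<and> P s} \<union> (if P t then {t} else {})"
    by (auto simp: less_Suc_eq)
  then show ?thesis by (auto simp: card_insert_if)
qed

lemma sum_card_times_eq_sum_card_vertices: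
  fixes t :: nat
  assumes "finite L"
  shows "(\<Sum>v\<in>L. card {s. s < t \<and> P s v}) = (\<Sum>s<t. card {v\<in>L. P s v})"
proof (induction t)
  case 0
  then show ?case by simp
next
  case (Suc t)
  have "(\<Sum>v\<in>L. card {s. s < Suc t \<and> P s v})
      = (\<Sum>v\<in>L. card {s. s < t \<and> P s v}) + (\<Sum>v\<in>L. if P t v then 1 else 0)"
    by (simp add: card_less_Suc sum.distrib)
  also have "(\<Sum>v\<in>L. if P t v then 1 else 0) = card {v\<in>L. P t v}"
    using assms by (simp add: sum.If_cases Int_def)
  finally show ?case using Suc by simp
qed

definition counter_step :: "nat \<Rightarrow> (nat \<Rightarrow> nat) \<Rightarrow> (nat \<Rightarrow> nat) \<Rightarrow> bool" where
  "counter_step a A x \<longleftrightarrow> (\<forall>s. x (Suc s) = (if x s < a then x s + A s else x s + A s - a))"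

lemma counter_balance:
  assumes "counter_step a A x"
  shows "a * card {s. s < n \<and> a \<le> x s} + x n = x 0 + (\<Sum>s<n. A s)"
proof (induction n)
  case 0
  then show ?case by simp
next
  case (Suc n)
  have "x (Suc n) + (if a \<le> x n then a else 0) = x n + A n"
    using assms by (simp add: counter_step_def)
  then show ?case using Suc by (simp add: card_less_Suc split: if_splits)
qed

lemma counter_update_mod:
  assumes "x < 2 * (a::nat)"
  shows "(if x < a then x + y else x + y - a) = y + x mod a"
proof (cases "x < a")
  case False
  then have "x mod a = x - a" using assms by (simp add: le_mod_geq)
  with False show ?thesis by simp
qed simp

lemma counter_step_mod:
  assumes step: "counter_step a A x" and inputs: "\<And>s. A s \<le> a" and start: "x 0 < 2 * a"
  shows "x s < 2 * a \<and> x (Suc s) = A s + x s mod a"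
proof (induction s)
  case 0
  have "x 1 = A 0 + x 0 mod a"
    using step counter_update_mod[OF start] by (simp add: counter_step_def)
  then show ?case using start by simp
next
  case (Suc s)
  have pos: "0 < a" using start by simp
  have bound: "x (Suc s) < 2 * a"
    using Suc inputs[of s] mod_less_divisor[OF pos, of "x s"] by linarith
  then have "x (Suc (Suc s)) = A (Suc s) + x (Suc s) mod a"
    using step counter_update_mod[OF bound] by (simp add: counter_step_def)
  with bound show ?case by simp
qed

lemma counter_extra_firings:
  assumes step: "counter_step a A x" and inputs: "\<And>s. A s \<le> a" and start: "x 0 < 2 * a"
    and received: "(\<Sum>s<t. A s) = k * a"
  shows "card {s. s < t + 1 \<and> a \<le> x s} = card {s. s < 1 \<and> a \<le> x s} + k"
proof -
  define u where "u n = card {s. s < n \<and> a \<le> x s}" for n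
  have pos: "0 < a" using start by simp
  have same_residue: "x t mod a = x 0 mod a"
    using arg_cong[OF counter_balance[OF step, of t], of "\<lambda>n. n mod a"] received
    by (simp add: u_def)
  have "a * u 1 + x 1 = x 0 + A 0"
    using counter_balance[OF step, of 1] by (simp add: u_def)
  moreover have "a * u (t + 1) + x (t + 1) = x 0 + k * a + A t"
    using counter_balance[OF step, of "t + 1"] received by (simp add: u_def)
  moreover have "x 1 = A 0 + x 0 mod a" "x (t + 1) = A t + x 0 mod a"
    using counter_step_mod[OF step inputs start, of 0]
      counter_step_mod[OF step inputs start, of t] same_residue by simp_all
  ultimately have "a * u (t + 1) = a * (u 1 + k)"
    by (simp add: algebra_simps)
  then show ?thesis using pos by (simp add: u_def)
qed

lemma deg_kab_R:
  assumes "L \<inter> R = {}" "w \<in> R"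
  shows "deg (L \<union> R) (kab_adj L R) w = card L"
proof -
  have "{x \<in> L \<union> R. kab_adj L R w x} = L" using assms by (auto simp: kab_adj_def)
  then show ?thesis by (simp add: deg_def)
qed

lemma Phi_kab_R:
  assumes "L \<inter> R = {}" "w \<in> R"
  shows "Phi (L \<union> R) (kab_adj L R) \<sigma> w
       = card {v\<in>L. deg (L \<union> R) (kab_adj L R) v \<le> \<sigma> v}"
proof -
  have "{x \<in> L \<union> R. kab_adj L R w x \<and> deg (L \<union> R) (kab_adj L R) x \<le> \<sigma> x}
       = {v\<in>L. deg (L \<union> R) (kab_adj L R) v \<le> \<sigma> v}"
    using assms by (auto simp: kab_adj_def)
  then show ?thesis by (simp add: Phi_def)
qed

definition L_firing :: "'v set \<Rightarrow> 'v set \<Rightarrow> ('v \<Rightarrow> nat) \<Rightarrow> nat \<Rightarrow> nat" where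
  "L_firing L R \<sigma> s = card {v\<in>L. deg (L \<union> R) (kab_adj L R) v
                                  \<le> (step (L \<union> R) (kab_adj L R) ^^ s) \<sigma> v}"

lemma kab_R_counter:
  assumes "L \<inter> R = {}" "w \<in> R"
  shows "counter_step (card L) (L_firing L R \<sigma>)
           (\<lambda>s. (step (L \<union> R) (kab_adj L R) ^^ s) \<sigma> w)"
  using assms unfolding counter_step_def
  by (auto simp: step_def deg_kab_R Phi_kab_R L_firing_def)

lemma L_firing_le:
  assumes "finite L"
  shows "L_firing L R \<sigma> s \<le> card L"
  unfolding L_firing_def using assms by (intro card_mono) auto

lemma alpha_eq_sum_L_firing:
  assumes "finite L"
  shows "alpha (L \<union> R) (kab_adj L R) t \<sigma> L = (\<Sum>s<t. L_firing L R \<sigma> s)"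
  unfolding alpha_def fire_count_def L_firing_def
  using sum_card_times_eq_sum_card_vertices[OF assms] by simp

(* Confinement at an R-vertex w says sigma w < Phi w + |L| <= 2 |L|. *)
lemma confined_kab_R_start:
  assumes "finite L" "L \<inter> R = {}" "w \<in> R" "confined (L \<union> R) (kab_adj L R) \<sigma>"
  shows "\<sigma> w < 2 * card L"
proof -
  have "\<sigma> w + 1 \<le> Phi (L \<union> R) (kab_adj L R) \<sigma> w + deg (L \<union> R) (kab_adj L R) w"
    using assms(3,4) unfolding confined_def by blast
  then have "\<sigma> w + 1 \<le> Phi (L \<union> R) (kab_adj L R) \<sigma> w + card L"
    by (simp only: deg_kab_R[OF assms(2,3)])
  moreover have "Phi (L \<union> R) (kab_adj L R) \<sigma> w \<le> card L"
    using L_firing_le[OF assms(1), of R \<sigma> 0] by (simp add: Phi_kab_R[OF assms(2,3)] L_firing_def)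
  ultimately show ?thesis by simp
qed

theorem lemma3p3:
  fixes L R :: "'v set" and \<sigma> :: "'v \<Rightarrow> nat" and t k :: nat
  assumes "finite L" and "finite R" and "L \<inter> R = {}"
    and "L \<noteq> {}" and "R \<noteq> {}"
    and "confined (L \<union> R) (kab_adj L R) \<sigma>"
    and "t \<ge> 1" and "k > 0"
    and "alpha (L \<union> R) (kab_adj L R) t \<sigma> L = k * card L"
  shows "\<forall>w\<in>R. int (fire_count (L \<union> R) (kab_adj L R) (t + 1) \<sigma> w)
                 - int (fire_count (L \<union> R) (kab_adj L R) 1 \<sigma> w) = int k"
proof
  fix w assume w: "w \<in> R"
  have "card {s. s < t + 1 \<and> card L \<le> (step (L \<union> R) (kab_adj L R) ^^ s) \<sigma> w}
      = card {s. s < 1 \<and> card L \<le> (step (L \<union> R) (kab_adj L R) ^^ s) \<sigma> w} + k"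
    using counter_extra_firings[OF kab_R_counter[OF assms(3) w] L_firing_le[OF assms(1)]]
      confined_kab_R_start[OF assms(1,3) w assms(6)]
      assms(9) alpha_eq_sum_L_firing[OF assms(1)]
    by simp
  then show "int (fire_count (L \<union> R) (kab_adj L R) (t + 1) \<sigma> w)
           - int (fire_count (L \<union> R) (kab_adj L R) 1 \<sigma> w) = int k"
    by (simp add: fire_count_def deg_kab_R[OF assms(3) w])
qed

end
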